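(* Let $P\in\mathfrak N_2$ and let $r:P\to R$ be a retraction onto a 4-crown stack $R$. If there are level indices $\ell$ of $R$ and $k$ of $P$ with $R(\ell)\subseteq P(k)$, then at least one of the following exists: (a) a retractive up-split $(\max\{k-1,0\},U,s,t)$ of $P$ with $S(h_S)<T(0)$ and such that for every $u\in U$ there is $v\in T(0)$ with $u\not<p$ for all $p\in t^{-1}(v)$; (b) a retractive down-split $(\min\{k+1,h_P\},D,s,t)$ of $P$ with $T(h_T)<S(0)$ and such that for every $d\in D$ there is $v\in T(h_T)$ with $p\not<d$ for all $p\in t^{-1}(v)$.
   Context: All posets are finite; $h_P$ is the height; level sets $P(0)=\min P$, $P(k+1)=\min(P\setminus\bigcup_{i\le k}P(i))$; $P(k\to\ell)=\bigcup_{i=k}^\ell P(i)$ as induced subposet; level sets of $R,S,T$ refer to their own levels. $A<B$ means $a<b$ for all $a\in A,b\in B$. A retraction is an idempotent order-preserving self-map; its image is a retract. A 4-crown stack is an ordinal sum of at least two 2-element antichains. A section of width three is a poset $P$ of height $h_P\ge1$ with carrier $\{c_{k,j}:k\in[0,h_P],j\in\{0,1,2\}\}$ such that: $c_{0,j}<\dots<c_{h_P,j}$ for each $j$; each $\{c_{k,0},c_{k,1},c_{k,2}\}$ is an antichain; $c_{k,i}<c_{\ell,j}\Rightarrow c_{k,i+1}<c_{\ell,j+1}$ (indices mod 3); and for no $k$ is $P(k)<P(k+1)$. It is nice if for all $x<y$: $\{z:z>x\}\not\subseteq\{z:z\ge y\}$ and $\{z:z<y\}\not\subseteq\{z:z\le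 x\}$. $\mathfrak N_2$ is the class of nice sections of width three of height $\ge2$ with horizon 2, i.e. $P(k)<P(\ell)$ whenever $\ell\ge k+2$. For $P\in\mathfrak N_2$, a retractive up-split is a quadruple $(k,U,s,t)$ with $k\in[0,h_P-1]$, $U\subset P(0\to k)$, $s:P(0\to k)\setminus U\to S$ a retraction and $t:P(k+1\to h_P)\to T$ a retraction; a retractive down-split is $(k,D,s,t)$ with $k\in[1,h_P]$, $D\subset P(k\to h_P)$, $s:P(k\to h_P)\setminus D\to S$ and $t:P(0\to k-1)\to T$ retractions; in both cases $S$ and $T$ are each a 2-element antichain or a 4-crown stack. *)

theory Defs
  imports Main
begin

text \<open>Induced subposets are obtained by restricting the carrier and keeping le.\<close>

definition partial_order_on' :: "'a set \<Rightarrow> ('a \<Rightarrow> 'a \<Rightarrow> bool) \<Rightarrow> bool" where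
  "partial_order_on' X le \<longleftrightarrow>
     (\<forall>x\<in>X. le x x) \<and>
     (\<forall>x\<in>X. \<forall>y\<in>X. le x y \<and> le y x \<longrightarrow> x = y) \<and>
     (\<forall>x\<in>X. \<forall>y\<in>X. \<forall>z\<in>X. le x y \<and> le y z \<longrightarrow> le x z)"

definition lt :: "('a \<Rightarrow> 'a \<Rightarrow> bool) \<Rightarrow> 'a \<Rightarrow> 'a \<Rightarrow> bool" where
  "lt le x y \<longleftrightarrow> le x y \<and> x \<noteq> y"

definition set_less :: "('a \<Rightarrow> 'a \<Rightarrow> bool) \<Rightarrow> 'a set \<Rightarrow> 'a set \<Rightarrow> bool" where
  "set_less le A B \<longleftrightarrow> (\<forall>a\<in>A. \<forall>b\<in>B. lt le a b)"

definition chain_in :: "('a \<Rightarrow> 'a \<Rightarrow> bool) \<Rightarrow> 'a set \<Rightarrow> bool" where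
  "chain_in le C \<longleftrightarrow> (\<forall>x\<in>C. \<forall>y\<in>C. le x y \<or> le y x)"

definition antichain_in :: "('a \<Rightarrow> 'a \<Rightarrow> bool) \<Rightarrow> 'a set \<Rightarrow> bool" where
  "antichain_in le A \<longleftrightarrow> (\<forall>x\<in>A. \<forall>y\<in>A. le x y \<longrightarrow> x = y)"

definition height :: "'a set \<Rightarrow> ('a \<Rightarrow> 'a \<Rightarrow> bool) \<Rightarrow> nat" where
  "height X le = Max {card C | C. C \<subseteq> X \<and> chain_in le C} - 1"

definition minimals :: "'a set \<Rightarrow> ('a \<Rightarrow> 'a \<Rightarrow> bool) \<Rightarrow> 'a set" where
  "minimals S le = {x \<in> S. \<not> (\<exists>y\<in>S. lt le y x)}"

text \<open>rest X le k = X minus the union of the levels 0..k-1.\<close>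
primrec rest :: "'a set \<Rightarrow> ('a \<Rightarrow> 'a \<Rightarrow> bool) \<Rightarrow> nat \<Rightarrow> 'a set" where
  "rest X le 0 = X"
| "rest X le (Suc k) = rest X le k - minimals (rest X le k) le"

definition level :: "'a set \<Rightarrow> ('a \<Rightarrow> 'a \<Rightarrow> bool) \<Rightarrow> nat \<Rightarrow> 'a set" where
  "level X le k = minimals (rest X le k) le"

definition levels :: "'a set \<Rightarrow> ('a \<Rightarrow> 'a \<Rightarrow> bool) \<Rightarrow> nat \<Rightarrow> nat \<Rightarrow> 'a set" where
  "levels X le k l = (\<Union>i\<in>{k..l}. level X le i)"

definition retraction_on :: "'a set \<Rightarrow> ('a \<Rightarrow> 'a \<Rightarrow> bool) \<Rightarrow> ('a \<Rightarrow> 'a) \<Rightarrow> bool" where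
  "retraction_on A le r \<longleftrightarrow>
     (\<forall>x\<in>A. r x \<in> A) \<and>
     (\<forall>x\<in>A. \<forall>y\<in>A. le x y \<longrightarrow> le (r x) (r y)) \<and>
     (\<forall>x\<in>A. r (r x) = r x)"

definition two_antichain :: "'a set \<Rightarrow> ('a \<Rightarrow> 'a \<Rightarrow> bool) \<Rightarrow> bool" where
  "two_antichain S le \<longleftrightarrow> card S = 2 \<and> antichain_in le S"

text \<open>4-crown stack: ordinal sum of at least two 2-element antichains.\<close>
definition crown_stack :: "'a set \<Rightarrow> ('a \<Rightarrow> 'a \<Rightarrow> bool) \<Rightarrow> bool" where
  "crown_stack S le \<longleftrightarrow>
     (\<exists>n::nat. \<exists>A::nat \<Rightarrow> 'a set. n \<ge> 2 \<and>
        (\<forall>i<n. two_antichain (A i) le) \<and>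
        S = (\<Union>i<n. A i) \<and>
        (\<forall>i<n. \<forall>j<n. i < j \<longrightarrow> set_less le (A i) (A j)))"

text \<open>Section of width three, with carrier indexed by c k j, k in [0,h_P], j in {0,1,2}.\<close>
definition section3 :: "'a set \<Rightarrow> ('a \<Rightarrow> 'a \<Rightarrow> bool) \<Rightarrow> (nat \<Rightarrow> nat \<Rightarrow> 'a) \<Rightarrow> bool" where
  "section3 X le c \<longleftrightarrow>
     (let h = height X le in
       h \<ge> 1 \<and>
       inj_on (\<lambda>(k, j). c k j) ({0..h} \<times> {0..<3}) \<and>
       X = (\<lambda>(k, j). c k j) ` ({0..h} \<times> {0..<3}) \<and>
       (\<forall>j<3. \<forall>k<h. lt le (c k j) (c (Suc k) j)) \<and>
       (\<forall>k\<le>h. antichain_in le {c k 0, c k 1, c k 2}) \<and>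
       (\<forall>k\<le>h. \<forall>l\<le>h. \<forall>i<3. \<forall>j<3.
          lt le (c k i) (c l j) \<longrightarrow> lt le (c k ((i + 1) mod 3)) (c l ((j + 1) mod 3))) \<and>
       (\<forall>k<h. \<not> set_less le (level X le k) (level X le (Suc k))))"

definition nice :: "'a set \<Rightarrow> ('a \<Rightarrow> 'a \<Rightarrow> bool) \<Rightarrow> bool" where
  "nice X le \<longleftrightarrow>
     (\<forall>x\<in>X. \<forall>y\<in>X. lt le x y \<longrightarrow>
        \<not> ({z\<in>X. lt le x z} \<subseteq> {z\<in>X. le y z}) \<and>
        \<not> ({z\<in>X. lt le z y} \<subseteq> {z\<in>X. le z x}))"

definition N2 :: "'a set \<Rightarrow> ('a \<Rightarrow> 'a \<Rightarrow> bool) \<Rightarrow> bool" where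
  "N2 X le \<longleftrightarrow>
     finite X \<and> partial_order_on' X le \<and>
     (\<exists>c. section3 X le c) \<and> nice X le \<and> height X le \<ge> 2 \<and>
     (\<forall>k l. l \<ge> k + 2 \<longrightarrow> set_less le (level X le k) (level X le l))"

definition split_piece :: "'a set \<Rightarrow> ('a \<Rightarrow> 'a \<Rightarrow> bool) \<Rightarrow> bool" where
  "split_piece S le \<longleftrightarrow> two_antichain S le \<or> crown_stack S le"

definition up_split ::
  "'a set \<Rightarrow> ('a \<Rightarrow> 'a \<Rightarrow> bool) \<Rightarrow> nat \<Rightarrow> 'a set \<Rightarrow> ('a \<Rightarrow> 'a) \<Rightarrow> 'a set \<Rightarrow> ('a \<Rightarrow> 'a) \<Rightarrow> 'a set \<Rightarrow> bool" where
  "up_split X le k U s S t T \<longleftrightarrow>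
     (let h = height X le in
       k \<le> h - 1 \<and>
       U \<subseteq> levels X le 0 k \<and>
       retraction_on (levels X le 0 k - U) le s \<and> S = s ` (levels X le 0 k - U) \<and>
       retraction_on (levels X le (k + 1) h) le t \<and> T = t ` (levels X le (k + 1) h) \<and>
       split_piece S le \<and> split_piece T le)"

definition down_split ::
  "'a set \<Rightarrow> ('a \<Rightarrow> 'a \<Rightarrow> bool) \<Rightarrow> nat \<Rightarrow> 'a set \<Rightarrow> ('a \<Rightarrow> 'a) \<Rightarrow> 'a set \<Rightarrow> ('a \<Rightarrow> 'a) \<Rightarrow> 'a set \<Rightarrow> bool" where
  "down_split X le k D s S t T \<longleftrightarrow>
     (let h = height X le in
       1 \<le> k \<and> k \<le> h \<and>
       D \<subseteq> levels X le k h \<and>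
       retraction_on (levels X le k h - D) le s \<and> S = s ` (levels X le k h - D) \<and>
       retraction_on (levels X le 0 (k - 1)) le t \<and> T = t ` (levels X le 0 (k - 1)) \<and>
       split_piece S le \<and> split_piece T le)"

end

theory Submission
  imports Defs
begin

text \<open>Write the retract R as the ordinal sum of two-element blocks A 0 < ... < A (n - 1), with
  R(l) = A l = {a, b} inside the level P(k) = {a, b, z}, and cut R just below or just above A l.
  Cutting below gives the up-split at k - 1: on the levels up to k - 1, minus the points that r
  sends above the cut, r retracts onto the lower blocks; on the levels from k on, r followed by
  collapsing onto a everything that lands below the cut retracts onto the upper blocks. The
  latter is monotone when r z lies above the cut, since every point above level k dominates one of
  a, b, z, and also when k is the top level, an antichain. The exceptional points escape the
  fibre of an element of A l not above their image. Cutting above A l is dual and gives the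
  down-split at k + 1. The two cases where neither applies, l = 0 < k and l = n - 1 with
  k < h_P, are impossible: a and b would have a common strict lower (upper) bound in P, by the
  horizon or, next to the extreme level, by niceness, and r would map it onto both a and b.\<close>

section \<open>Levels\<close>

lemma rest_subset: "rest X le k \<subseteq> X"
  by (induction k) auto

lemma level_subset: "level X le k \<subseteq> X"
  using rest_subset[of X le k] unfolding level_def minimals_def by blast

lemma levels_subset: "levels X le p q \<subseteq> X"
  using level_subset[of X le] unfolding levels_def by blast

lemma levels_mono: "p' \<le> p \<Longrightarrow> q \<le> q' \<Longrightarrow> levels X le p q \<subseteq> levels X le p' q'"
  unfolding levels_def by (intro UN_mono) auto

lemma levelsI: "x \<in> level X le i \<Longrightarrow> p \<le> i \<Longrightarrow> i \<le> q \<Longrightarrow> x \<in> levels X le p q"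
  unfolding levels_def by auto

lemma levelsE:
  assumes "x \<in> levels X le p q"
  obtains i where "p \<le> i" "i \<le> q" "x \<in> level X le i"
  using assms unfolding levels_def by auto

locale poset =
  fixes X :: "'a set" and le :: "'a \<Rightarrow> 'a \<Rightarrow> bool"
  assumes partial_order: "partial_order_on' X le"
begin

lemma level_memD: "x \<in> level X le k \<Longrightarrow> x \<in> X"
  using level_subset[of X le k] by blast

lemma levels_memD: "x \<in> levels X le p q \<Longrightarrow> x \<in> X"
  using levels_subset[of X le p q] by blast

lemma refl: "x \<in> X \<Longrightarrow> le x x"
  using partial_order unfolding partial_order_on'_def by blast

lemma antisym: "x \<in> X \<Longrightarrow> y \<in> X \<Longrightarrow> le x y \<Longrightarrow> le y x \<Longrightarrow> x = y"
  using partial_order unfolding partial_order_on'_def by blast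

lemma trans: "x \<in> X \<Longrightarrow> y \<in> X \<Longrightarrow> z \<in> X \<Longrightarrow> le x y \<Longrightarrow> le y z \<Longrightarrow> le x z"
  using partial_order unfolding partial_order_on'_def by blast

end

section \<open>Ordinal sums of two-element antichains\<close>

locale antichain_stack = poset +
  fixes A :: "nat \<Rightarrow> 'a set" and n :: nat
  assumes block_subset: "\<And>i. i < n \<Longrightarrow> A i \<subseteq> X"
    and block_two_antichain: "\<And>i. i < n \<Longrightarrow> two_antichain (A i) le"
    and block_set_less: "\<And>i j. i < n \<Longrightarrow> j < n \<Longrightarrow> i < j \<Longrightarrow> set_less le (A i) (A j)"
begin

definition blocks :: "nat \<Rightarrow> nat \<Rightarrow> 'a set" where
  "blocks p q = (\<Union>i\<in>{p..<q}. A i)"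

lemma blocksI: "p \<le> i \<Longrightarrow> i < q \<Longrightarrow> x \<in> A i \<Longrightarrow> x \<in> blocks p q"
  unfolding blocks_def by auto

lemma blocksE:
  assumes "x \<in> blocks p q"
  obtains i where "p \<le> i" "i < q" "x \<in> A i"
  using assms unfolding blocks_def by auto

lemma block_doubleton: "i < n \<Longrightarrow> \<exists>x y. x \<noteq> y \<and> A i = {x, y}"
  using block_two_antichain[of i] unfolding two_antichain_def by (auto simp: card_2_iff)

lemma block_nonempty: "i < n \<Longrightarrow> \<exists>x. x \<in> A i"
  using block_doubleton by blast

lemma block_antichain: "i < n \<Longrightarrow> x \<in> A i \<Longrightarrow> y \<in> A i \<Longrightarrow> le x y \<Longrightarrow> x = y"
  using block_two_antichain[of i] unfolding two_antichain_def antichain_in_def by blast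

lemma block_less: "i < n \<Longrightarrow> j < n \<Longrightarrow> i < j \<Longrightarrow> x \<in> A i \<Longrightarrow> y \<in> A j \<Longrightarrow> lt le x y"
  using block_set_less unfolding set_less_def by blast

lemma block_index_le:
  assumes "i < n" "j < n" "x \<in> A i" "y \<in> A j" "le x y"
  shows "i \<le> j"
proof (rule ccontr)
  assume "\<not> i \<le> j"
  then have "lt le y x" using block_less[of j i y x] assms by simp
  then show False using antisym[of x y] assms block_subset unfolding lt_def by blast
qed

lemma block_index_less:
  assumes "i < n" "j < n" "x \<in> A i" "y \<in> A j" "lt le x y"
  shows "i < j"
  using block_index_le[OF assms(1-4)] block_antichain[OF assms(1,3)] assms(4,5)
  unfolding lt_def by (metis le_neq_implies_less)

lemma block_index_unique: "i < n \<Longrightarrow> j < n \<Longrightarrow> x \<in> A i \<Longrightarrow> x \<in> A j \<Longrightarrow> i = j"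
  using block_index_le refl block_subset by (meson le_antisym subsetD)

lemma minimals_blocks:
  assumes "p < q" "q \<le> n"
  shows "minimals (blocks p q) le = A p"
proof
  show "minimals (blocks p q) le \<subseteq> A p"
  proof
    fix x assume x: "x \<in> minimals (blocks p q) le"
    then obtain i where i: "p \<le> i" "i < q" "x \<in> A i"
      unfolding minimals_def by (auto elim: blocksE)
    obtain y where y: "y \<in> A p" using block_nonempty assms by force
    have "\<not> lt le y x" using x y assms unfolding minimals_def by (auto intro: blocksI)
    then show "x \<in> A p" using block_less[of p i y x] i y assms by fastforce
  qed
  show "A p \<subseteq> minimals (blocks p q) le"
  proof
    fix x assume x: "x \<in> A p"
    have "\<not> lt le y x" if "y \<in> blocks p q" for y
    proof
      assume "lt le y x"
      obtain i where "p \<le> i" "i < q" "y \<in> A i" using \<open>y \<in> blocks p q\<close> by (rule blocksE)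
      then show False using block_index_less[of i p y x] \<open>lt le y x\<close> x assms by simp
    qed
    then show "x \<in> minimals (blocks p q) le"
      using x assms unfolding minimals_def by (auto intro: blocksI)
  qed
qed

lemma rest_blocks: "q \<le> n \<Longrightarrow> rest (blocks p q) le j = blocks (p + j) q"
proof (induction j)
  case (Suc j)
  show ?case
  proof (cases "p + j < q")
    case True
    have "rest (blocks p q) le (Suc j) = blocks (p + j) q - A (p + j)"
      using Suc minimals_blocks[OF True] by simp
    also have "\<dots> = blocks (p + Suc j) q"
    proof
      show "blocks (p + j) q - A (p + j) \<subseteq> blocks (p + Suc j) q"
      proof
        fix x assume "x \<in> blocks (p + j) q - A (p + j)"
        then obtain i where "p + j \<le> i" "i < q" "x \<in> A i" "i \<noteq> p + j"
          by (auto elim: blocksE)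
        then show "x \<in> blocks (p + Suc j) q" by (intro blocksI[of _ i]) auto
      qed
      show "blocks (p + Suc j) q \<subseteq> blocks (p + j) q - A (p + j)"
      proof
        fix x assume "x \<in> blocks (p + Suc j) q"
        then obtain i where i: "p + Suc j \<le> i" "i < q" "x \<in> A i" by (rule blocksE)
        then have "x \<notin> A (p + j)"
          using block_index_unique[of i "p + j" x] Suc.prems True by auto
        moreover have "x \<in> blocks (p + j) q" using i by (intro blocksI[of _ i]) auto
        ultimately show "x \<in> blocks (p + j) q - A (p + j)" by blast
      qed
    qed
    finally show ?thesis .
  next
    case False
    then have "blocks (p + j) q = {}" "blocks (p + Suc j) q = {}"
      by (auto elim: blocksE)
    then show ?thesis using Suc by (simp add: minimals_def)
  qed
qed simp

lemma level_blocks: "q \<le> n \<Longrightarrow> p + j < q \<Longrightarrow> level (blocks p q) le j = A (p + j)"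
  unfolding level_def by (simp add: rest_blocks minimals_blocks)

lemma blocks_subset: "q \<le> n \<Longrightarrow> blocks p q \<subseteq> X"
  using block_subset unfolding blocks_def by (meson UN_least atLeastLessThan_iff less_le_trans)

lemma blocks_union:
  assumes "p \<le> m" "m \<le> q"
  shows "blocks p q = blocks p m \<union> blocks m q"
proof -
  have "{p..<q} = {p..<m} \<union> {m..<q}" using assms by auto
  then show ?thesis unfolding blocks_def by (simp add: UN_Un)
qed

lemma blocks_not_le:
  assumes "q \<le> n" "x \<in> blocks p m" "y \<in> blocks m q"
  shows "\<not> le y x"
proof
  assume "le y x"
  obtain i where i: "i < m" "x \<in> A i" using assms(2) by (rule blocksE)
  obtain j where j: "m \<le> j" "j < q" "y \<in> A j" using assms(3) by (rule blocksE)
  have "j \<le> i" using block_index_le[of j i y x] i j assms(1) \<open>le y x\<close> by simp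
  then show False using i j by simp
qed

lemma blocks_disjoint: "q \<le> n \<Longrightarrow> blocks p m \<inter> blocks m q = {}"
  using blocks_not_le refl blocks_subset by blast

lemma blocks_upward_closed:
  assumes "m \<le> n" "y \<in> blocks 0 n" "w \<in> blocks m n" "le w y"
  shows "y \<in> blocks m n"
  using assms blocks_union[of 0 m n] blocks_not_le[of n y 0 m w] by auto

lemma blocks_downward_closed:
  assumes "m \<le> n" "y \<in> blocks 0 n" "w \<in> blocks 0 m" "le y w"
  shows "y \<in> blocks 0 m"
  using assms blocks_union[of 0 m n] blocks_not_le[of n w 0 m y] by auto

lemma block_exists_not_ge:
  assumes "m < n" "w \<in> blocks m n"
  shows "\<exists>v\<in>A m. \<not> le w v"
proof -
  obtain j where j: "m \<le> j" "j < n" "w \<in> A j" using assms(2) by (rule blocksE)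
  obtain v where v: "v \<in> A m" "v \<noteq> w" using block_doubleton[OF assms(1)] by blast
  have "\<not> le w v"
  proof
    assume "le w v"
    then have "j = m" using block_index_le[OF j(2) assms(1) j(3) v(1)] j(1) by simp
    then show False using block_antichain[OF assms(1)] j(3) v \<open>le w v\<close> by blast
  qed
  then show ?thesis using v by blast
qed

lemma block_exists_not_le:
  assumes "m < n" "w \<in> blocks 0 (Suc m)"
  shows "\<exists>v\<in>A m. \<not> le v w"
proof -
  obtain j where "0 \<le> j" "j < Suc m" "w \<in> A j" using assms(2) by (rule blocksE)
  then have j: "j \<le> m" "w \<in> A j" by simp_all
  obtain v where v: "v \<in> A m" "v \<noteq> w" using block_doubleton[OF assms(1)] by blast
  have "\<not> le v w"
  proof
    assume "le v w"
    then have "j = m" using block_index_le[OF assms(1) _ v(1) j(2)] j assms(1) by simp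
    then show False using block_antichain[OF assms(1)] j(2) v \<open>le v w\<close> by blast
  qed
  then show ?thesis using v by blast
qed

lemma le_bottom_block_eq:
  assumes "y \<in> blocks 0 n" "v \<in> A 0" "le y v"
  shows "y = v"
proof -
  obtain j where j: "j < n" "y \<in> A j" using assms(1) by (rule blocksE)
  then have "j = 0" using block_index_le[OF j(1) _ j(2) assms(2,3)] by simp
  then show ?thesis using block_antichain j assms by blast
qed

lemma top_block_le_eq:
  assumes "y \<in> blocks 0 n" "v \<in> A (n - 1)" "le v y"
  shows "y = v"
proof -
  obtain j where j: "j < n" "y \<in> A j" using assms(1) by (rule blocksE)
  then have "j = n - 1" using block_index_le[OF _ j(1) assms(2) j(2) assms(3)] by simp
  then show ?thesis using block_antichain j assms by blast
qed

lemma card_chain_in_blocks: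
  assumes "q \<le> n" "C \<subseteq> blocks p q" "chain_in le C"
  shows "card C \<le> q - p"
proof -
  define idx where "idx x = (SOME i. p \<le> i \<and> i < q \<and> x \<in> A i)" for x
  have ex: "\<exists>i. p \<le> i \<and> i < q \<and> x \<in> A i" if "x \<in> C" for x
    using that assms(2) by (blast elim: blocksE)
  have idx: "p \<le> idx x \<and> idx x < q \<and> x \<in> A (idx x)" if "x \<in> C" for x
    unfolding idx_def by (rule someI_ex[OF ex[OF that]])
  have "inj_on idx C"
  proof
    fix x y assume xy: "x \<in> C" "y \<in> C" "idx x = idx y"
    then have "le x y \<or> le y x" using assms(3) unfolding chain_in_def by blast
    moreover have "idx x < n" using idx[OF xy(1)] assms(1) by simp
    ultimately show "x = y"
      using idx[OF xy(1)] idx[OF xy(2)] xy(3) block_antichain[of "idx x" x y] block_antichain[of "idx x" y x]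
      by auto
  qed
  moreover have "idx ` C \<subseteq> {p..<q}" using idx by auto
  ultimately have "card C \<le> card {p..<q}" by (intro card_inj_on_le) auto
  then show ?thesis by simp
qed

lemma height_blocks:
  assumes "p < q" "q \<le> n"
  shows "height (blocks p q) le = q - p - 1"
proof -
  let ?cards = "{card C | C. C \<subseteq> blocks p q \<and> chain_in le C}"
  define pick where "pick i = (SOME x. x \<in> A i)" for i
  have pick: "pick i \<in> A i" if "i < n" for i
    unfolding pick_def using block_nonempty[OF that] by (rule someI_ex)
  let ?C = "pick ` {p..<q}"
  have "chain_in le ?C"
    unfolding chain_in_def
  proof (intro ballI)
    fix x y assume "x \<in> ?C" "y \<in> ?C"
    then obtain i j where ij: "i \<in> {p..<q}" "j \<in> {p..<q}" "x = pick i" "y = pick j" by blast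
    then have "i < n" "j < n" using assms by auto
    then have "lt le x y \<or> x = y \<or> lt le y x"
    proof (cases i j rule: linorder_cases)
      case less then show ?thesis using ij pick block_less[of i j] \<open>i < n\<close> \<open>j < n\<close> by simp
    next
      case greater then show ?thesis using ij pick block_less[of j i] \<open>i < n\<close> \<open>j < n\<close> by simp
    qed (use ij in simp)
    then show "le x y \<or> le y x"
      using refl pick block_subset ij \<open>i < n\<close> unfolding lt_def by blast
  qed
  moreover have "?C \<subseteq> blocks p q" using pick assms by (auto intro: blocksI)
  moreover have "inj_on pick {p..<q}"
  proof
    fix i j assume "i \<in> {p..<q}" "j \<in> {p..<q}" "pick i = pick j"
    then show "i = j" using pick[of i] pick[of j] block_index_unique[of i j "pick i"] assms by auto
  qed
  then have "card ?C = q - p" by (simp add: card_image)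
  ultimately have witness: "q - p \<in> ?cards" by (metis (mono_tags, lifting) mem_Collect_eq)
  have bound: "m \<le> q - p" if "m \<in> ?cards" for m
    using that card_chain_in_blocks[OF assms(2)] by blast
  have "finite ?cards" using bound by (meson atMost_iff finite_atMost finite_subset subsetI)
  then have "Max ?cards = q - p" by (rule Max_eqI[OF _ bound witness])
  then show ?thesis unfolding height_def by simp
qed

lemma split_piece_blocks:
  assumes "p < q" "q \<le> n"
  shows "split_piece (blocks p q) le"
proof (cases "q = Suc p")
  case True
  then have "blocks p q = A p" unfolding blocks_def by auto
  then show ?thesis using block_two_antichain assms unfolding split_piece_def by auto
next
  case False
  have "blocks p q = (\<Union>i<q - p. A (p + i))"
  proof
    show "blocks p q \<subseteq> (\<Union>i<q - p. A (p + i))"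
    proof
      fix x assume "x \<in> blocks p q"
      then obtain i where "p \<le> i" "i < q" "x \<in> A i" by (rule blocksE)
      then show "x \<in> (\<Union>i<q - p. A (p + i))" by (intro UN_I[of "i - p"]) auto
    qed
    show "(\<Union>i<q - p. A (p + i)) \<subseteq> blocks p q"
      using blocksI[of p "p + _" q] by (auto simp: less_diff_conv add.commute)
  qed
  then have "crown_stack (blocks p q) le"
    unfolding crown_stack_def using False assms block_two_antichain block_set_less
    by (intro exI[of _ "q - p"] exI[of _ "\<lambda>i. A (p + i)"]) auto
  then show ?thesis unfolding split_piece_def by auto
qed

end

section \<open>Levels of a section of width three\<close>

locale width3_section = poset +
  fixes c :: "nat \<Rightarrow> nat \<Rightarrow> 'a"
  assumes is_section: "section3 X le c"
begin

abbreviation hP :: nat where "hP \<equiv> height X le"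

lemma height_pos: "1 \<le> hP"
  using is_section unfolding section3_def Let_def by blast

lemma c_inj: "inj_on (\<lambda>(k, j). c k j) ({0..hP} \<times> {0..<3})"
  using is_section unfolding section3_def Let_def by blast

lemma carrier_eq: "X = (\<lambda>(k, j). c k j) ` ({0..hP} \<times> {0..<3})"
  using is_section unfolding section3_def Let_def by blast

lemma c_less_Suc: "j < 3 \<Longrightarrow> k < hP \<Longrightarrow> lt le (c k j) (c (Suc k) j)"
  using is_section unfolding section3_def Let_def by blast

lemma row_antichain: "k \<le> hP \<Longrightarrow> antichain_in le {c k 0, c k 1, c k 2}"
  using is_section unfolding section3_def Let_def by blast

lemma carrier_rows: "X = {c i j | i j. i \<le> hP \<and> j < 3}"
  by (subst carrier_eq) (auto simp: image_def intro!: bexI, blast)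

lemma c_mem: "k \<le> hP \<Longrightarrow> j < 3 \<Longrightarrow> c k j \<in> X"
  using carrier_rows by auto

lemma row_eq: "{c k j | j. j < 3} = {c k 0, c k 1, c k 2}"
proof -
  have "j < 3 \<longleftrightarrow> j = 0 \<or> j = 1 \<or> j = 2" for j :: nat by auto
  then show ?thesis by auto
qed

lemma c_eq_iff:
  "k \<le> hP \<Longrightarrow> j < 3 \<Longrightarrow> k' \<le> hP \<Longrightarrow> j' < 3 \<Longrightarrow> c k j = c k' j' \<longleftrightarrow> k = k' \<and> j = j'"
  using c_inj unfolding inj_on_def by auto

lemma c_le_mono: "k \<le> i \<Longrightarrow> i \<le> hP \<Longrightarrow> j < 3 \<Longrightarrow> le (c k j) (c i j)"
proof (induction i rule: dec_induct)
  case base then show ?case using refl c_mem by simp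
next
  case (step i)
  then show ?case
    using trans[of "c k j" "c i j" "c (Suc i) j"] c_less_Suc[of j i] c_mem unfolding lt_def by simp
qed

lemma row_le_eq: "k \<le> hP \<Longrightarrow> j < 3 \<Longrightarrow> j' < 3 \<Longrightarrow> le (c k j) (c k j') \<Longrightarrow> j = j'"
proof -
  assume a: "k \<le> hP" "j < 3" "j' < 3" "le (c k j) (c k j')"
  have "c k x \<in> {c k 0, c k 1, c k 2}" if "x < 3" for x
    using that row_eq by blast
  then have "c k j = c k j'"
    using row_antichain[OF a(1)] a unfolding antichain_in_def by blast
  then show "j = j'" using c_eq_iff a by blast
qed

lemma c_less_row_less:
  assumes "k \<le> hP" "i \<le> hP" "j < 3" "j' < 3" "lt le (c k j) (c i j')"
  shows "k < i"
proof (rule ccontr)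
  assume "\<not> k < i"
  then have below: "le (c i j') (c k j')" using c_le_mono assms by simp
  then have "le (c k j) (c k j')" using trans[of "c k j" "c i j'" "c k j'"] assms c_mem unfolding lt_def by blast
  then have "j = j'" using row_le_eq assms by blast
  then show False using antisym[of "c k j" "c i j'"] below assms c_mem unfolding lt_def by blast
qed

definition rows_from :: "nat \<Rightarrow> 'a set" where
  "rows_from k = {c i j | i j. k \<le> i \<and> i \<le> hP \<and> j < 3}"

lemma minimals_rows_from: "k \<le> hP \<Longrightarrow> minimals (rows_from k) le = {c k j | j. j < 3}"
proof
  assume k: "k \<le> hP"
  show "minimals (rows_from k) le \<subseteq> {c k j | j. j < 3}"
  proof
    fix x assume x: "x \<in> minimals (rows_from k) le"
    then obtain i j where ij: "x = c i j" "k \<le> i" "i \<le> hP" "j < 3"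
      unfolding minimals_def rows_from_def by auto
    have "i = k"
    proof (rule ccontr)
      assume "i \<noteq> k"
      then have "k \<le> i - 1" "lt le (c (i - 1) j) (c i j)"
        using ij c_less_Suc[of j "i - 1"] by auto
      moreover have "i - 1 \<le> hP" using ij by simp
      ultimately have "c (i - 1) j \<in> rows_from k" "lt le (c (i - 1) j) x"
        using ij unfolding rows_from_def by blast+
      then show False using x ij unfolding minimals_def by blast
    qed
    then show "x \<in> {c k j | j. j < 3}" using ij by auto
  qed
  show "{c k j | j. j < 3} \<subseteq> minimals (rows_from k) le"
    using k c_less_row_less unfolding minimals_def rows_from_def by fastforce
qed

lemma rest_eq_rows_from: "rest X le k = rows_from k"
proof (induction k)
  case 0 then show ?case using carrier_rows unfolding rows_from_def by simp
next
  case (Suc k)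
  show ?case
  proof (cases "k \<le> hP")
    case True
    have "rows_from k - {c k j | j. j < 3} = rows_from (Suc k)"
    proof
      show "rows_from k - {c k j | j. j < 3} \<subseteq> rows_from (Suc k)"
        unfolding rows_from_def by (force simp: Suc_le_eq le_less)
      show "rows_from (Suc k) \<subseteq> rows_from k - {c k j | j. j < 3}"
        using c_eq_iff True unfolding rows_from_def by fastforce
    qed
    then show ?thesis using Suc minimals_rows_from[OF True] by simp
  next
    case False
    then show ?thesis using Suc unfolding rows_from_def by (auto simp: minimals_def)
  qed
qed

lemma level_eq: "k \<le> hP \<Longrightarrow> level X le k = {c k 0, c k 1, c k 2}"
  unfolding level_def rest_eq_rows_from
  by (simp add: minimals_rows_from row_eq)

lemma level_empty: "hP < k \<Longrightarrow> level X le k = {}"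
  unfolding level_def minimals_def rest_eq_rows_from rows_from_def by auto

lemma level_le_height: "x \<in> level X le k \<Longrightarrow> k \<le> hP"
  using level_empty by (cases "k \<le> hP") auto

lemma level_memE:
  assumes "x \<in> level X le k"
  obtains j where "j < 3" "x = c k j"
proof -
  have "x \<in> {c k j | j. j < 3}" using assms level_eq level_le_height row_eq by blast
  then show ?thesis using that by blast
qed

lemma level_cover: "x \<in> X \<Longrightarrow> \<exists>i\<le>hP. x \<in> level X le i"
  using carrier_rows level_eq row_eq by blast

lemma level_less:
  assumes "x \<in> level X le i" "y \<in> level X le j" "lt le x y"
  shows "i < j"
proof -
  obtain ji jj where "ji < 3" "x = c i ji" "jj < 3" "y = c j jj"
    using assms(1,2) by (elim level_memE)
  then show ?thesis using c_less_row_less level_le_height assms by metis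
qed

lemma level_antichain: "x \<in> level X le k \<Longrightarrow> y \<in> level X le k \<Longrightarrow> le x y \<Longrightarrow> x = y"
  using level_less unfolding lt_def by blast

lemma c_less_mono: "k < i \<Longrightarrow> i \<le> hP \<Longrightarrow> j < 3 \<Longrightarrow> lt le (c k j) (c i j)"
  using c_le_mono c_eq_iff unfolding lt_def by simp

lemma exists_below_in_level:
  assumes "y \<in> level X le i" "k < i"
  shows "\<exists>x\<in>level X le k. lt le x y"
proof -
  obtain j where j: "j < 3" "y = c i j" using assms(1) by (rule level_memE)
  have i: "i \<le> hP" using level_le_height[OF assms(1)] .
  have "c k j \<in> level X le k" using level_eq i assms(2) j row_eq by fastforce
  then show ?thesis using c_less_mono[OF assms(2) i j(1)] j by blast
qed

lemma exists_above_in_level: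
  assumes "x \<in> level X le k" "k < i" "i \<le> hP"
  shows "\<exists>y\<in>level X le i. lt le x y"
proof -
  obtain j where j: "j < 3" "x = c k j" using assms(1) by (rule level_memE)
  have "c i j \<in> level X le i" using level_eq assms(3) j row_eq by fastforce
  then show ?thesis using c_less_mono[OF assms(2,3) j(1)] j by blast
qed

lemma card_level: "k \<le> hP \<Longrightarrow> card (level X le k) = 3"
  using level_eq c_eq_iff[of k 0 k 1] c_eq_iff[of k 0 k 2] c_eq_iff[of k 1 k 2] by simp

lemma level_pairs_intersect:
  assumes "{a1, a2} \<subseteq> level X le k" "{b1, b2} \<subseteq> level X le k" "a1 \<noteq> a2" "b1 \<noteq> b2"
  shows "{a1, a2} \<inter> {b1, b2} \<noteq> {}"
proof
  assume disjoint: "{a1, a2} \<inter> {b1, b2} = {}"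
  have k: "k \<le> hP" using assms(1) level_le_height by blast
  have "card {a1, a2, b1, b2} = 4" using disjoint assms(3,4) by auto
  moreover have "card {a1, a2, b1, b2} \<le> card (level X le k)"
    using assms(1,2) level_eq[OF k] by (intro card_mono) auto
  ultimately show False using card_level[OF k] by simp
qed

lemma level_eq_insert_third:
  assumes "a \<in> level X le k" "b \<in> level X le k" "a \<noteq> b"
  obtains z where "level X le k = {a, b, z}"
proof -
  have k: "k \<le> hP" using assms level_le_height by blast
  have fin: "finite (level X le k)" using level_eq[OF k] by simp
  have "\<not> level X le k \<subseteq> {a, b}"
    using card_mono[of "{a, b}" "level X le k"] card_level[OF k] assms(3) by auto
  then obtain z where z: "z \<in> level X le k" "z \<noteq> a" "z \<noteq> b" by blast
  have "card {a, b, z} = card (level X le k)" using z assms card_level[OF k] by simp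
  then have "{a, b, z} = level X le k" using z assms by (intro card_subset_eq fin) auto
  then show ?thesis using that z by blast
qed

end

locale n2_section = width3_section +
  assumes nice: "nice X le"
    and horizon: "\<And>k l. k + 2 \<le> l \<Longrightarrow> set_less le (level X le k) (level X le l)"
begin

lemma two_below_in_bottom_level:
  assumes "y \<in> level X le 1"
  obtains x1 x2 where "x1 \<noteq> x2" "{x1, x2} \<subseteq> level X le 0" "lt le x1 y" "lt le x2 y"
proof -
  obtain x where x: "x \<in> level X le 0" "lt le x y" using exists_below_in_level[OF assms] by auto
  have xy: "x \<in> X" "y \<in> X" using x assms level_memD by auto
  then obtain z where z: "z \<in> X" "lt le z y" "\<not> le z x"
    using nice x unfolding nice_def by blast
  obtain i where "z \<in> level X le i" using level_cover z by blast
  then have "z \<in> level X le 0" using level_less[OF _ assms z(2)] by (metis One_nat_def less_Suc0)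
  moreover have "z \<noteq> x" using z refl xy by auto
  ultimately show ?thesis using that x z by blast
qed

lemma two_above_in_top_level:
  assumes "x \<in> level X le (hP - 1)"
  obtains y1 y2 where "y1 \<noteq> y2" "{y1, y2} \<subseteq> level X le hP" "lt le x y1" "lt le x y2"
proof -
  have top: "Suc (hP - 1) = hP" using height_pos by simp
  obtain y where y: "y \<in> level X le hP" "lt le x y"
    using exists_above_in_level[OF assms, of hP] top by auto
  have xy: "x \<in> X" "y \<in> X" using y assms level_memD by auto
  then obtain z where z: "z \<in> X" "lt le x z" "\<not> le y z"
    using nice y unfolding nice_def by blast
  obtain i where i: "i \<le> hP" "z \<in> level X le i" using level_cover z by blast
  moreover have "hP - 1 < i" using level_less[OF assms i(2) z(2)] .
  ultimately have "z \<in> level X le hP" using top by (metis Suc_leI le_antisym)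
  moreover have "z \<noteq> y" using z refl xy by auto
  ultimately show ?thesis using that y z by blast
qed

text \<open>On level 1, niceness gives each of a and b two lower covers, and two such pairs must meet in
  the three-element bottom level; on higher levels the horizon puts all of level 0 below a and b.\<close>

lemma common_lower_bound:
  assumes "a \<in> level X le k" "b \<in> level X le k" "0 < k"
  shows "\<exists>p\<in>X. lt le p a \<and> lt le p b"
proof (cases "k = 1")
  case True
  then have "a \<in> level X le 1" "b \<in> level X le 1" using assms by simp_all
  obtain x1 x2 where x: "x1 \<noteq> x2" "{x1, x2} \<subseteq> level X le 0" "lt le x1 a" "lt le x2 a"
    using \<open>a \<in> level X le 1\<close> by (rule two_below_in_bottom_level)
  obtain y1 y2 where y: "y1 \<noteq> y2" "{y1, y2} \<subseteq> level X le 0" "lt le y1 b" "lt le y2 b"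
    using \<open>b \<in> level X le 1\<close> by (rule two_below_in_bottom_level)
  have "{x1, x2} \<inter> {y1, y2} \<noteq> {}" using level_pairs_intersect x y by blast
  then show ?thesis using x y level_memD by blast
next
  case False
  have "c 0 0 \<in> level X le 0" using level_eq by simp
  moreover have "set_less le (level X le 0) (level X le k)" using horizon False assms(3) by simp
  ultimately show ?thesis using assms(1,2) level_memD unfolding set_less_def by blast
qed

lemma common_upper_bound:
  assumes "a \<in> level X le k" "b \<in> level X le k" "k < hP"
  shows "\<exists>p\<in>X. lt le a p \<and> lt le b p"
proof (cases "k = hP - 1")
  case True
  then have "a \<in> level X le (hP - 1)" "b \<in> level X le (hP - 1)" using assms by simp_all
  obtain x1 x2 where x: "x1 \<noteq> x2" "{x1, x2} \<subseteq> level X le hP" "lt le a x1" "lt le a x2"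
    using \<open>a \<in> level X le (hP - 1)\<close> by (rule two_above_in_top_level)
  obtain y1 y2 where y: "y1 \<noteq> y2" "{y1, y2} \<subseteq> level X le hP" "lt le b y1" "lt le b y2"
    using \<open>b \<in> level X le (hP - 1)\<close> by (rule two_above_in_top_level)
  have "{x1, x2} \<inter> {y1, y2} \<noteq> {}" using level_pairs_intersect x y by blast
  then show ?thesis using x y level_memD by blast
next
  case False
  have "c hP 0 \<in> level X le hP" using level_eq by simp
  moreover have "set_less le (level X le k) (level X le hP)" using horizon False assms(3) by simp
  ultimately show ?thesis using assms(1,2) level_memD unfolding set_less_def by blast
qed

end

section \<open>A retraction onto a 4-crown stack meeting a level\<close>

definition separated_up_split :: "'a set \<Rightarrow> ('a \<Rightarrow> 'a \<Rightarrow> bool) \<Rightarrow> nat \<Rightarrow> bool" where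
  "separated_up_split X le k \<longleftrightarrow>
    (\<exists>U s S t T. up_split X le (max (k - 1) 0) U s S t T \<and>
      set_less le (level S le (height S le)) (level T le 0) \<and>
      (\<forall>u\<in>U. \<exists>v\<in>level T le 0.
         \<forall>p\<in>levels X le (max (k - 1) 0 + 1) (height X le). t p = v \<longrightarrow> \<not> lt le u p))"

definition separated_down_split :: "'a set \<Rightarrow> ('a \<Rightarrow> 'a \<Rightarrow> bool) \<Rightarrow> nat \<Rightarrow> bool" where
  "separated_down_split X le k \<longleftrightarrow>
    (\<exists>D s S t T. down_split X le (min (k + 1) (height X le)) D s S t T \<and>
      set_less le (level T le (height T le)) (level S le 0) \<and>
      (\<forall>d\<in>D. \<exists>v\<in>level T le (height T le).
         \<forall>p\<in>levels X le 0 (min (k + 1) (height X le) - 1). t p = v \<longrightarrow> \<not> lt le p d))"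

locale crown_retract = n2_section X le c + antichain_stack X le A n
  for X :: "'a set" and le c A n +
  fixes r :: "'a \<Rightarrow> 'a" and l k :: nat and a b z :: 'a
  assumes retraction: "retraction_on X le r"
    and image_r: "r ` X = blocks 0 n"
    and two_le_n: "2 \<le> n"
    and l_less: "l < n"
    and block_l: "A l = {a, b}"
    and a_neq_b: "a \<noteq> b"
    and level_k: "level X le k = {a, b, z}"
begin

lemma r_mem: "x \<in> X \<Longrightarrow> r x \<in> blocks 0 n"
  using image_r by blast

lemma r_fixed:
  assumes "y \<in> blocks 0 n"
  shows "r y = y"
proof -
  obtain x where "x \<in> X" "y = r x" using assms image_r by blast
  then show ?thesis using retraction unfolding retraction_on_def by simp
qed

lemma r_mono: "x \<in> X \<Longrightarrow> y \<in> X \<Longrightarrow> le x y \<Longrightarrow> le (r x) (r y)"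
  using retraction unfolding retraction_on_def by blast

lemma k_le_height: "k \<le> hP"
  using level_k level_le_height by blast

lemma block_l_in_blocks: "p \<le> l \<Longrightarrow> l < q \<Longrightarrow> A l \<subseteq> blocks p q"
  by (auto intro: blocksI)

lemma a_b_mem: "a \<in> X" "b \<in> X"
  using level_k level_memD by blast+

lemma r_a_b: "r a = a" "r b = b"
  using r_fixed block_l block_l_in_blocks[of 0 n] l_less by auto

lemma r_level_k:
  assumes "x \<in> level X le k" "x \<noteq> z"
  shows "r x = x" "x \<in> A l"
  using assms level_k block_l r_fixed block_l_in_blocks[of 0 n] l_less by auto

lemma below_block_l_level_less:
  assumes "x \<in> blocks 0 l" "x \<in> level X le i"
  shows "i < k"
proof -
  obtain j where "j < l" "x \<in> A j" using assms(1) by (rule blocksE)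
  then have "lt le x a" using block_less[of j l x a] l_less block_l by simp
  then show ?thesis using level_less[OF assms(2), of a k] level_k by simp
qed

lemma above_block_l_level_greater:
  assumes "x \<in> blocks (Suc l) n" "x \<in> level X le i"
  shows "k < i"
proof -
  obtain j where "Suc l \<le> j" "j < n" "x \<in> A j" using assms(1) by (rule blocksE)
  then have "lt le a x" using block_less[of l j a x] l_less block_l by simp
  then show ?thesis using level_less[OF _ assms(2), of a k] level_k by simp
qed

lemma blocks_below_l_subset: "blocks 0 l \<subseteq> levels X le 0 (k - 1)"
proof
  fix x assume x: "x \<in> blocks 0 l"
  obtain i where i: "i \<le> hP" "x \<in> level X le i"
    using x blocks_subset[of l 0] l_less level_cover by force
  then show "x \<in> levels X le 0 (k - 1)"
    using below_block_l_level_less[OF x i(2)] by (intro levelsI) auto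
qed

lemma blocks_above_l_subset: "blocks (Suc l) n \<subseteq> levels X le (Suc k) hP"
proof
  fix x assume x: "x \<in> blocks (Suc l) n"
  obtain i where i: "i \<le> hP" "x \<in> level X le i"
    using x blocks_subset[of n "Suc l"] level_cover by force
  then show "x \<in> levels X le (Suc k) hP"
    using above_block_l_level_greater[OF x i(2)] by (intro levelsI) auto
qed

lemma block_l_subset: "A l \<subseteq> levels X le p q" if "p \<le> k" "k \<le> q"
  using that block_l level_k by (auto intro: levelsI)

lemma blocks_from_l_subset: "blocks l n \<subseteq> levels X le k hP"
proof -
  have "blocks l n = A l \<union> blocks (Suc l) n"
    using blocks_union[of l "Suc l" n] l_less unfolding blocks_def by auto
  moreover have "levels X le (Suc k) hP \<subseteq> levels X le k hP" by (rule levels_mono) simp_all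
  ultimately show ?thesis using block_l_subset k_le_height blocks_above_l_subset by auto
qed

lemma blocks_to_l_subset: "blocks 0 (Suc l) \<subseteq> levels X le 0 k"
proof -
  have "blocks 0 (Suc l) = blocks 0 l \<union> A l"
    using blocks_union[of 0 l "Suc l"] unfolding blocks_def by auto
  moreover have "levels X le 0 (k - 1) \<subseteq> levels X le 0 k" by (rule levels_mono) simp_all
  ultimately show ?thesis using block_l_subset blocks_below_l_subset by auto
qed

end

locale crown_retract_up = crown_retract +
  assumes l_pos: "0 < l"
    and z_up: "r z \<in> blocks l n \<or> k = hP"
begin

definition up_map :: "'a \<Rightarrow> 'a" where
  "up_map x = (if r x \<in> blocks l n then r x else a)"

definition up_exceptions :: "'a set" where
  "up_exceptions = {x \<in> levels X le 0 (k - 1). r x \<in> blocks l n}"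

lemma k_pos: "0 < k"
proof -
  obtain x where x: "x \<in> A (l - 1)" using block_nonempty l_less by (meson less_imp_diff_less)
  then have x_below: "x \<in> blocks 0 l" using l_pos by (intro blocksI[of _ "l - 1"]) auto
  then obtain i where "x \<in> level X le i" using blocks_subset[of l 0] l_less level_cover by force
  from below_block_l_level_less[OF x_below this] show ?thesis by simp
qed

lemma r_upper_levels:
  assumes "x \<in> levels X le k hP" "x \<noteq> z \<or> r z \<in> blocks l n"
  shows "r x \<in> blocks l n"
proof -
  have on_level_k: "r y \<in> blocks l n" if "y \<in> level X le k" "y \<noteq> z \<or> r z \<in> blocks l n" for y
    using that r_level_k block_l_in_blocks[of l n] l_less by (cases "y = z") auto
  obtain i where i: "k \<le> i" "i \<le> hP" "x \<in> level X le i" using assms(1) by (rule levelsE)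
  show ?thesis
  proof (cases "i = k")
    case True then show ?thesis using on_level_k i assms(2) by simp
  next
    case False
    then have "r z \<in> blocks l n" using z_up i by simp
    obtain y where y: "y \<in> level X le k" "lt le y x"
      using exists_below_in_level[OF i(3), of k] i(1) False by auto
    have "le (r y) (r x)" using r_mono y i(3) level_memD unfolding lt_def by blast
    then show ?thesis
      using blocks_upward_closed[of l "r x" "r y"] on_level_k[OF y(1)] \<open>r z \<in> blocks l n\<close>
        r_mem i(3) level_memD l_less by auto
  qed
qed

lemma up_map_mem: "up_map x \<in> blocks l n"
  using block_l_in_blocks[of l n] l_less block_l unfolding up_map_def by auto

lemma up_map_fixed: "y \<in> blocks l n \<Longrightarrow> up_map y = y"
  using r_fixed blocks_union[of 0 l n] l_less unfolding up_map_def by auto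

lemma retraction_up_map: "retraction_on (levels X le k hP) le up_map"
  unfolding retraction_on_def
proof (intro conjI ballI impI)
  fix x assume "x \<in> levels X le k hP"
  show "up_map x \<in> levels X le k hP" using up_map_mem blocks_from_l_subset by blast
  show "up_map (up_map x) = up_map x" using up_map_fixed up_map_mem by blast
next
  fix x y assume xy: "x \<in> levels X le k hP" "y \<in> levels X le k hP" "le x y"
  show "le (up_map x) (up_map y)"
  proof (cases "r z \<in> blocks l n \<or> (x \<noteq> z \<and> y \<noteq> z)")
    case True
    then have "up_map x = r x" "up_map y = r y"
      using r_upper_levels xy unfolding up_map_def by auto
    then show ?thesis using r_mono xy levels_memD by auto
  next
    case False
    then have "k = hP" using z_up by blast
    then have "x \<in> level X le hP" "y \<in> level X le hP" using xy(1,2) by (auto elim!: levelsE)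
    then have "x = y" using level_antichain xy(3) by blast
    then show ?thesis using refl up_map_mem blocks_subset[of n l] by blast
  qed
qed

lemma image_up_map: "up_map ` levels X le k hP = blocks l n"
  using up_map_mem up_map_fixed blocks_from_l_subset by (auto intro: rev_image_eqI)

lemma r_lower_levels:
  assumes "x \<in> levels X le 0 (k - 1) - up_exceptions"
  shows "r x \<in> blocks 0 l"
  using assms r_mem levels_memD blocks_union[of 0 l n] l_less
  unfolding up_exceptions_def by auto

lemma retraction_lower: "retraction_on (levels X le 0 (k - 1) - up_exceptions) le r"
  unfolding retraction_on_def
proof (intro conjI ballI impI)
  fix x assume x: "x \<in> levels X le 0 (k - 1) - up_exceptions"
  have rx: "r x \<in> blocks 0 l" using r_lower_levels[OF x] .
  have fixed: "r (r x) = r x" using r_fixed r_mem x levels_memD by blast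
  have "r x \<notin> blocks l n" using rx blocks_disjoint l_less by blast
  then show "r x \<in> levels X le 0 (k - 1) - up_exceptions"
    using rx blocks_below_l_subset fixed unfolding up_exceptions_def by auto
  show "r (r x) = r x" by (rule fixed)
next
  fix x y assume "x \<in> levels X le 0 (k - 1) - up_exceptions"
    "y \<in> levels X le 0 (k - 1) - up_exceptions" "le x y"
  then show "le (r x) (r y)" using r_mono levels_memD by blast
qed

lemma image_lower: "r ` (levels X le 0 (k - 1) - up_exceptions) = blocks 0 l"
proof
  show "r ` (levels X le 0 (k - 1) - up_exceptions) \<subseteq> blocks 0 l" using r_lower_levels by blast
  show "blocks 0 l \<subseteq> r ` (levels X le 0 (k - 1) - up_exceptions)"
  proof
    fix y assume y: "y \<in> blocks 0 l"
    have fixed: "r y = y" using y r_fixed blocks_union[of 0 l n] l_less by auto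
    moreover have "y \<notin> blocks l n" using y blocks_disjoint l_less by blast
    ultimately have "y \<in> levels X le 0 (k - 1) - up_exceptions"
      using y blocks_below_l_subset unfolding up_exceptions_def by auto
    then show "y \<in> r ` (levels X le 0 (k - 1) - up_exceptions)" using fixed by force
  qed
qed

lemma up_split_holds: "up_split X le (k - 1) up_exceptions r (blocks 0 l) up_map (blocks l n)"
proof -
  have "k - 1 + 1 = k" using k_pos by simp
  then show ?thesis
    unfolding up_split_def Let_def
    using k_le_height retraction_lower image_lower retraction_up_map image_up_map
      split_piece_blocks[of 0 l] split_piece_blocks[of l n] l_pos l_less
    by (auto simp: up_exceptions_def)
qed

lemma up_exceptions_escape:
  assumes "u \<in> up_exceptions"
  shows "\<exists>v\<in>A l. \<forall>p\<in>levels X le k hP. up_map p = v \<longrightarrow> \<not> lt le u p"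
proof -
  have ru: "r u \<in> blocks l n" and u: "u \<in> X"
    using assms levels_memD unfolding up_exceptions_def by auto
  obtain v where v: "v \<in> A l" "\<not> le (r u) v" using block_exists_not_ge[OF l_less ru] by blast
  have "\<not> lt le u p" if p: "p \<in> levels X le k hP" "up_map p = v" for p
  proof
    assume "lt le u p"
    then have ru_rp: "le (r u) (r p)" using r_mono u p levels_memD unfolding lt_def by blast
    show False
    proof (cases "r p \<in> blocks l n")
      case True then show False using p ru_rp v unfolding up_map_def by simp
    next
      case False
      then have "r p \<in> blocks 0 l"
        using r_mem p levels_memD blocks_union[of 0 l n] l_less by auto
      then show False using blocks_not_le[of n "r p" 0 l "r u"] ru ru_rp by simp
    qed
  qed
  then show ?thesis using v by blast
qed

lemma separated_up_split: "separated_up_split X le k"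
proof -
  have k: "max (k - 1) 0 = k - 1" "k - 1 + 1 = k" using k_pos by auto
  have "height (blocks 0 l) le = l - 1" using height_blocks l_pos l_less by simp
  moreover have "level (blocks 0 l) le (l - 1) = A (l - 1)" using level_blocks[of l 0 "l - 1"] l_pos l_less by simp
  moreover have "level (blocks l n) le 0 = A l" using level_blocks[of n l 0] l_less by simp
  moreover have "set_less le (A (l - 1)) (A l)" using block_set_less l_pos l_less by simp
  ultimately show ?thesis
    unfolding separated_up_split_def k
    using up_split_holds up_exceptions_escape
    by (intro exI[of _ up_exceptions] exI[of _ r] exI[of _ "blocks 0 l"] exI[of _ up_map]
        exI[of _ "blocks l n"] conjI) simp_all
qed

end

locale crown_retract_down = crown_retract +
  assumes Suc_l_less: "Suc l < n"
    and z_down: "r z \<in> blocks 0 (Suc l) \<or> k = 0"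
begin

definition down_map :: "'a \<Rightarrow> 'a" where
  "down_map x = (if r x \<in> blocks 0 (Suc l) then r x else a)"

definition down_exceptions :: "'a set" where
  "down_exceptions = {x \<in> levels X le (k + 1) hP. r x \<in> blocks 0 (Suc l)}"

lemma k_less_height: "k < hP"
proof -
  obtain x where x: "x \<in> A (Suc l)" using block_nonempty Suc_l_less by blast
  then have x_above: "x \<in> blocks (Suc l) n" using Suc_l_less by (intro blocksI) auto
  then obtain i where "i \<le> hP" "x \<in> level X le i"
    using blocks_subset[of n "Suc l"] level_cover by force
  with above_block_l_level_greater[OF x_above] show ?thesis by force
qed

lemma r_lower_levels:
  assumes "x \<in> levels X le 0 k" "x \<noteq> z \<or> r z \<in> blocks 0 (Suc l)"
  shows "r x \<in> blocks 0 (Suc l)"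
proof -
  have on_level_k: "r y \<in> blocks 0 (Suc l)" if "y \<in> level X le k" "y \<noteq> z \<or> r z \<in> blocks 0 (Suc l)" for y
    using that r_level_k block_l_in_blocks[of 0 "Suc l"] by (cases "y = z") auto
  obtain i where i: "i \<le> k" "x \<in> level X le i" using assms(1) by (auto elim: levelsE)
  show ?thesis
  proof (cases "i = k")
    case True then show ?thesis using on_level_k i assms(2) by simp
  next
    case False
    then have "r z \<in> blocks 0 (Suc l)" using z_down i by simp
    obtain y where y: "y \<in> level X le k" "lt le x y"
      using exists_above_in_level[OF i(2), of k] i(1) False k_le_height by auto
    have "le (r x) (r y)" using r_mono y i(2) level_memD unfolding lt_def by blast
    then show ?thesis
      using blocks_downward_closed[of "Suc l" "r x" "r y"] on_level_k[OF y(1)] \<open>r z \<in> blocks 0 (Suc l)\<close>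
        r_mem i(2) level_memD Suc_l_less by auto
  qed
qed

lemma down_map_mem: "down_map x \<in> blocks 0 (Suc l)"
  using block_l_in_blocks[of 0 "Suc l"] block_l unfolding down_map_def by auto

lemma down_map_fixed: "y \<in> blocks 0 (Suc l) \<Longrightarrow> down_map y = y"
  using r_fixed blocks_union[of 0 "Suc l" n] Suc_l_less unfolding down_map_def by auto

lemma retraction_down_map: "retraction_on (levels X le 0 k) le down_map"
  unfolding retraction_on_def
proof (intro conjI ballI impI)
  fix x assume "x \<in> levels X le 0 k"
  show "down_map x \<in> levels X le 0 k" using down_map_mem blocks_to_l_subset by blast
  show "down_map (down_map x) = down_map x" using down_map_fixed down_map_mem by blast
next
  fix x y assume xy: "x \<in> levels X le 0 k" "y \<in> levels X le 0 k" "le x y"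
  show "le (down_map x) (down_map y)"
  proof (cases "r z \<in> blocks 0 (Suc l) \<or> (x \<noteq> z \<and> y \<noteq> z)")
    case True
    then have "down_map x = r x" "down_map y = r y"
      using r_lower_levels xy unfolding down_map_def by auto
    then show ?thesis using r_mono xy levels_memD by auto
  next
    case False
    then have "k = 0" using z_down by blast
    then have "x \<in> level X le 0" "y \<in> level X le 0" using xy(1,2) by (auto elim!: levelsE)
    then have "x = y" using level_antichain xy(3) by blast
    then show ?thesis using refl down_map_mem blocks_subset[of "Suc l" 0] Suc_l_less by auto
  qed
qed

lemma image_down_map: "down_map ` levels X le 0 k = blocks 0 (Suc l)"
  using down_map_mem down_map_fixed blocks_to_l_subset by (auto intro: rev_image_eqI)

lemma r_upper_levels:
  assumes "x \<in> levels X le (k + 1) hP - down_exceptions"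
  shows "r x \<in> blocks (Suc l) n"
  using assms r_mem levels_memD blocks_union[of 0 "Suc l" n] Suc_l_less
  unfolding down_exceptions_def by auto

lemma retraction_upper: "retraction_on (levels X le (k + 1) hP - down_exceptions) le r"
  unfolding retraction_on_def
proof (intro conjI ballI impI)
  fix x assume x: "x \<in> levels X le (k + 1) hP - down_exceptions"
  have rx: "r x \<in> blocks (Suc l) n" using r_upper_levels[OF x] .
  have fixed: "r (r x) = r x" using r_fixed r_mem x levels_memD by blast
  have "r x \<notin> blocks 0 (Suc l)" using rx blocks_disjoint by blast
  then show "r x \<in> levels X le (k + 1) hP - down_exceptions"
    using rx blocks_above_l_subset fixed unfolding down_exceptions_def by auto
  show "r (r x) = r x" by (rule fixed)
next
  fix x y assume "x \<in> levels X le (k + 1) hP - down_exceptions"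
    "y \<in> levels X le (k + 1) hP - down_exceptions" "le x y"
  then show "le (r x) (r y)" using r_mono levels_memD by blast
qed

lemma image_upper: "r ` (levels X le (k + 1) hP - down_exceptions) = blocks (Suc l) n"
proof
  show "r ` (levels X le (k + 1) hP - down_exceptions) \<subseteq> blocks (Suc l) n"
    using r_upper_levels by blast
  show "blocks (Suc l) n \<subseteq> r ` (levels X le (k + 1) hP - down_exceptions)"
  proof
    fix y assume y: "y \<in> blocks (Suc l) n"
    have fixed: "r y = y" using y r_fixed blocks_union[of 0 "Suc l" n] Suc_l_less by auto
    moreover have "y \<notin> blocks 0 (Suc l)" using y blocks_disjoint by blast
    ultimately have "y \<in> levels X le (k + 1) hP - down_exceptions"
      using y blocks_above_l_subset unfolding down_exceptions_def by auto
    then show "y \<in> r ` (levels X le (k + 1) hP - down_exceptions)" using fixed by force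
  qed
qed

lemma down_split_holds:
  "down_split X le (k + 1) down_exceptions r (blocks (Suc l) n) down_map (blocks 0 (Suc l))"
  unfolding down_split_def Let_def
  using k_less_height retraction_upper image_upper retraction_down_map image_down_map
    split_piece_blocks[of "Suc l" n] split_piece_blocks[of 0 "Suc l"] Suc_l_less
  by (auto simp: down_exceptions_def)

lemma down_exceptions_escape:
  assumes "d \<in> down_exceptions"
  shows "\<exists>v\<in>A l. \<forall>p\<in>levels X le 0 k. down_map p = v \<longrightarrow> \<not> lt le p d"
proof -
  have rd: "r d \<in> blocks 0 (Suc l)" and d: "d \<in> X"
    using assms levels_memD unfolding down_exceptions_def by auto
  obtain v where v: "v \<in> A l" "\<not> le v (r d)" using block_exists_not_le[OF l_less rd] by blast
  have "\<not> lt le p d" if p: "p \<in> levels X le 0 k" "down_map p = v" for p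
  proof
    assume "lt le p d"
    then have rp_rd: "le (r p) (r d)" using r_mono d p levels_memD unfolding lt_def by blast
    show False
    proof (cases "r p \<in> blocks 0 (Suc l)")
      case True then show False using p rp_rd v unfolding down_map_def by simp
    next
      case False
      then have "r p \<in> blocks (Suc l) n"
        using r_mem p levels_memD blocks_union[of 0 "Suc l" n] Suc_l_less by auto
      then show False using blocks_not_le[of n "r d" 0 "Suc l" "r p"] rd rp_rd by simp
    qed
  qed
  then show ?thesis using v by blast
qed

lemma separated_down_split: "separated_down_split X le k"
proof -
  have k: "min (k + 1) hP = k + 1" "k + 1 - 1 = k" using k_less_height by auto
  have "height (blocks 0 (Suc l)) le = l" using height_blocks Suc_l_less by simp
  moreover have "level (blocks 0 (Suc l)) le l = A l" using level_blocks[of "Suc l" 0 l] Suc_l_less by simp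
  moreover have "level (blocks (Suc l) n) le 0 = A (Suc l)" using level_blocks[of n "Suc l" 0] Suc_l_less by simp
  moreover have "set_less le (A l) (A (Suc l))" using block_set_less Suc_l_less by simp
  ultimately show ?thesis
    unfolding separated_down_split_def k
    using down_split_holds down_exceptions_escape
    by (intro exI[of _ down_exceptions] exI[of _ r] exI[of _ "blocks (Suc l) n"] exI[of _ down_map]
        exI[of _ "blocks 0 (Suc l)"] conjI) simp_all
qed

end

context crown_retract
begin

lemma l_pos_if_k_pos:
  assumes "0 < k"
  shows "0 < l"
proof (rule ccontr)
  assume "\<not> 0 < l"
  then have a_b_bottom: "a \<in> A 0" "b \<in> A 0" using block_l by auto
  obtain p where p: "p \<in> X" "lt le p a" "lt le p b"
    using common_lower_bound[of a k b] level_k assms by auto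
  have "le (r p) a" "le (r p) b"
    using r_mono[OF p(1) a_b_mem(1)] r_mono[OF p(1) a_b_mem(2)] p r_a_b unfolding lt_def by simp_all
  then have "r p = a" "r p = b" using le_bottom_block_eq r_mem[OF p(1)] a_b_bottom by auto
  then show False using a_neq_b by simp
qed

lemma Suc_l_less_if_k_less:
  assumes "k < hP"
  shows "Suc l < n"
proof (rule ccontr)
  assume "\<not> Suc l < n"
  then have "n - 1 = l" using l_less by simp
  then have a_b_top: "a \<in> A (n - 1)" "b \<in> A (n - 1)" using block_l by auto
  obtain p where p: "p \<in> X" "lt le a p" "lt le b p"
    using common_upper_bound[of a k b] level_k assms by auto
  have "le a (r p)" "le b (r p)"
    using r_mono[OF a_b_mem(1) p(1)] r_mono[OF a_b_mem(2) p(1)] p r_a_b unfolding lt_def by simp_all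
  then have "r p = a" "r p = b" using top_block_le_eq r_mem[OF p(1)] a_b_top by auto
  then show False using a_neq_b by simp
qed

lemma separated_split: "separated_up_split X le k \<or> separated_down_split X le k"
proof -
  have "r z \<in> blocks 0 n" using r_mem level_k level_memD by blast
  then consider (up) "r z \<in> blocks l n" | (down) "r z \<in> blocks 0 l"
    using blocks_union[of 0 l n] l_less by auto
  then show ?thesis
  proof cases
    case up
    show ?thesis
    proof (cases "0 < l")
      case True
      interpret crown_retract_up X le c A n r l k a b z
        using True up by unfold_locales simp_all
      show ?thesis using separated_up_split by blast
    next
      case False
      interpret crown_retract_down X le c A n r l k a b z
        using False two_le_n l_pos_if_k_pos by unfold_locales auto
      show ?thesis using separated_down_split by blast
    qed
  next
    case down
    then have "r z \<in> blocks 0 (Suc l)" using blocks_union[of 0 l "Suc l"] by auto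
    show ?thesis
    proof (cases "Suc l < n")
      case True
      interpret crown_retract_down X le c A n r l k a b z
        using True \<open>r z \<in> blocks 0 (Suc l)\<close> by unfold_locales simp_all
      show ?thesis using separated_down_split by blast
    next
      case False
      have "0 < l" using down by (auto elim: blocksE)
      interpret crown_retract_up X le c A n r l k a b z
        using \<open>0 < l\<close> False Suc_l_less_if_k_less k_le_height by unfold_locales auto
      show ?thesis using separated_up_split by blast
    qed
  qed
qed

end

theorem corollary6p4:
  fixes X :: "'a set" and le :: "'a \<Rightarrow> 'a \<Rightarrow> bool" and r :: "'a \<Rightarrow> 'a"
    and R :: "'a set" and k l :: nat
  assumes "N2 X le"
    and "retraction_on X le r" and "R = r ` X" and "crown_stack R le"
    and "l \<le> height R le" and "k \<le> height X le"
    and "level R le l \<subseteq> level X le k"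
  shows "(\<exists>U s S t T. up_split X le (max (k - 1) 0) U s S t T \<and>
            set_less le (level S le (height S le)) (level T le 0) \<and>
            (\<forall>u\<in>U. \<exists>v\<in>level T le 0.
               \<forall>p\<in>levels X le (max (k - 1) 0 + 1) (height X le). t p = v \<longrightarrow> \<not> lt le u p))
       \<or> (\<exists>D s S t T. down_split X le (min (k + 1) (height X le)) D s S t T \<and>
            set_less le (level T le (height T le)) (level S le 0) \<and>
            (\<forall>d\<in>D. \<exists>v\<in>level T le (height T le).
               \<forall>p\<in>levels X le 0 (min (k + 1) (height X le) - 1). t p = v \<longrightarrow> \<not> lt le p d))"
proof -
  obtain c where "section3 X le c" using assms(1) unfolding N2_def by blast
  interpret n2_section X le c
    using assms(1) \<open>section3 X le c\<close> unfolding N2_def by unfold_locales auto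
  obtain n :: nat and A where stack: "2 \<le> n" "\<forall>i<n. two_antichain (A i) le" "R = (\<Union>i<n. A i)"
    "\<forall>i<n. \<forall>j<n. i < j \<longrightarrow> set_less le (A i) (A j)"
    using assms(4) unfolding crown_stack_def by blast
  have "R \<subseteq> X" using assms(2,3) unfolding retraction_on_def by blast
  interpret antichain_stack X le A n
    using stack \<open>R \<subseteq> X\<close> by unfold_locales auto
  have R_blocks: "R = blocks 0 n" using stack(3) unfolding blocks_def by (simp add: atLeast0LessThan)
  have "l < n" using assms(5) height_blocks[of 0 n] stack(1) R_blocks by simp
  then have "A l \<subseteq> level X le k" using assms(7) level_blocks[of n 0 l] R_blocks by simp
  obtain a b where ab: "a \<noteq> b" "A l = {a, b}" using block_doubleton[OF \<open>l < n\<close>] by blast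
  moreover have "a \<in> level X le k" "b \<in> level X le k" using ab \<open>A l \<subseteq> level X le k\<close> by auto
  ultimately obtain z where "level X le k = {a, b, z}" using level_eq_insert_third by metis
  interpret crown_retract X le c A n r l k a b z
    using assms(2,3) R_blocks stack(1) \<open>l < n\<close> ab \<open>level X le k = {a, b, z}\<close> by unfold_locales auto
  show ?thesis using separated_split unfolding separated_up_split_def separated_down_split_def .
qed

end
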